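(* Let $G$ be an $H(4,3)$-free graph and $u^*\in V(G)$. Put $N=N(u^* )$, $W=V(G)\setminus N[u^*]$, and $A^{+}=\{v\in N: v \text{ has at least one neighbor in } N\}$. Assume that $G[A^{+}]\cong K_4$ and that every vertex of $W$ has at most one neighbor in $A^{+}$. Let $U=\{w\in W: w \text{ has exactly one neighbor in } A^{+}\}$. Then \[ e(A^{+},W)=|U|\le \alpha(G[W]). \]
   Context: $H(4,3)$ is the graph obtained from a $4$-cycle and a triangle by identifying one vertex of the $4$-cycle with one vertex of the triangle; $H(4,3)$-free means containing no subgraph isomorphic to $H(4,3)$. $N[u^*]=N(u^* )\cup\{u^*\}$. For disjoint vertex sets $X,Y$, $e(X,Y)$ is the number of edges with one end in $X$ and the other in $Y$. $\alpha(H)$ denotes the independence number of $H$, and $G[W]$ is the subgraph induced by $W$. *)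

theory Defs
  imports Main
begin

definition simple_graph :: "'a set \<Rightarrow> ('a \<Rightarrow> 'a \<Rightarrow> bool) \<Rightarrow> bool" where
  "simple_graph V E \<longleftrightarrow> finite V \<and> (\<forall>x y. E x y \<longrightarrow> x \<in> V \<and> y \<in> V)
     \<and> (\<forall>x y. E x y \<longrightarrow> E y x) \<and> (\<forall>x. \<not> E x x)"

definition nbhd :: "'a set \<Rightarrow> ('a \<Rightarrow> 'a \<Rightarrow> bool) \<Rightarrow> 'a \<Rightarrow> 'a set" where
  "nbhd V E u = {v \<in> V. E u v}"

definition closed_nbhd :: "'a set \<Rightarrow> ('a \<Rightarrow> 'a \<Rightarrow> bool) \<Rightarrow> 'a \<Rightarrow> 'a set" where
  "closed_nbhd V E u = insert u (nbhd V E u)"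

definition H43_free :: "'a set \<Rightarrow> ('a \<Rightarrow> 'a \<Rightarrow> bool) \<Rightarrow> bool" where
  "H43_free V E \<longleftrightarrow> \<not> (\<exists>a b c d e f. distinct [a, b, c, d, e, f]
      \<and> {a, b, c, d, e, f} \<subseteq> V
      \<and> E a b \<and> E b c \<and> E c d \<and> E d a \<and> E a e \<and> E e f \<and> E f a)"

text \<open>e(X,Y) for disjoint X, Y: number of edges xy with x in X, y in Y.\<close>
definition edges_between :: "('a \<Rightarrow> 'a \<Rightarrow> bool) \<Rightarrow> 'a set \<Rightarrow> 'a set \<Rightarrow> nat" where
  "edges_between E X Y = card {(x, y). x \<in> X \<and> y \<in> Y \<and> E x y}"

definition independent :: "('a \<Rightarrow> 'a \<Rightarrow> bool) \<Rightarrow> 'a set \<Rightarrow> bool" where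
  "independent E S \<longleftrightarrow> (\<forall>x\<in>S. \<forall>y\<in>S. \<not> E x y)"

definition indep_number :: "('a \<Rightarrow> 'a \<Rightarrow> bool) \<Rightarrow> 'a set \<Rightarrow> nat" where
  "indep_number E W = Max {card S | S. S \<subseteq> W \<and> independent E S}"

definition induced_complete :: "('a \<Rightarrow> 'a \<Rightarrow> bool) \<Rightarrow> 'a set \<Rightarrow> nat \<Rightarrow> bool" where
  "induced_complete E A n \<longleftrightarrow> finite A \<and> card A = n \<and> (\<forall>x\<in>A. \<forall>y\<in>A. x \<noteq> y \<longrightarrow> E x y)"

end

theory Submission
  imports Defs
begin

lemma H43_freeD:
  assumes "H43_free V E" "distinct [a, b, c, d, e, f]" "{a, b, c, d, e, f} \<subseteq> V"
    and "E a b" "E b c" "E c d" "E d a" "E a e" "E e f" "E f a"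
  shows False
  using assms unfolding H43_free_def by blast

lemma two_elements_avoiding:
  assumes "finite A" "4 \<le> card A"
  obtains b c where "b \<in> A" "c \<in> A" "b \<noteq> c" "b \<notin> {x, y}" "c \<notin> {x, y}"
proof -
  have "card A - card {x, y} \<le> card (A - {x, y})"
    by (rule diff_card_le_card_Diff) simp
  moreover have "card {x, y} \<le> 2"
    by (simp add: card_insert_le_m1)
  ultimately have "2 \<le> card (A - {x, y})"
    using assms(2) by linarith
  then obtain T where "T \<subseteq> A - {x, y}" "card T = 2"
    by (rule obtain_subset_with_card_n)
  then show thesis
    using that by (auto simp: card_2_iff)
qed

lemma edges_between_eq_sum:
  assumes "finite X" "finite Y"
  shows "edges_between E X Y = (\<Sum>y\<in>Y. card {x \<in> X. E x y})"
proof -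
  have "{(x, y). x \<in> X \<and> y \<in> Y \<and> E x y} = prod.swap ` (SIGMA y:Y. {x \<in> X. E x y})"
    by force
  then have "edges_between E X Y = card (SIGMA y:Y. {x \<in> X. E x y})"
    unfolding edges_between_def by (simp add: card_image swap_inj_on)
  then show ?thesis
    using assms by simp
qed

lemma sum_le_one_eq_card:
  fixes f :: "'a \<Rightarrow> nat"
  assumes "finite Y" "\<forall>y\<in>Y. f y \<le> 1"
  shows "(\<Sum>y\<in>Y. f y) = card {y \<in> Y. f y = 1}"
proof -
  have "(\<Sum>y\<in>Y. f y) = (\<Sum>y\<in>Y. if f y = 1 then 1 else 0)"
    using assms(2) by (intro sum.cong) (auto simp: le_Suc_eq)
  also have "\<dots> = card {y \<in> Y. f y = 1}"
    using assms(1) by (simp add: sum.If_cases Int_def)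
  finally show ?thesis .
qed

lemma independent_card_le_indep_number:
  assumes "finite W" "S \<subseteq> W" "independent E S"
  shows "card S \<le> indep_number E W"
  unfolding indep_number_def
proof (rule Max_ge)
  have "{card S |S. S \<subseteq> W \<and> independent E S} \<subseteq> card ` Pow W"
    by auto
  then show "finite {card S |S. S \<subseteq> W \<and> independent E S}"
    using assms(1) by (meson finite_Pow_iff finite_imageI finite_subset)
  show "card S \<in> {card S |S. S \<subseteq> W \<and> independent E S}"
    using assms(2,3) by auto
qed

text \<open>If the common neighbours coincide, the edge closes a triangle on it while two further
  clique vertices and the centre give the 4-cycle; otherwise the edge lies on a 4-cycle
  through both neighbours and two further clique vertices give the triangle.\<close>

lemma H43_free_clique_neighbours_nonadjacent:
  assumes G: "simple_graph V E" and free: "H43_free V E"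
    and u: "u \<in> V" and K: "K \<subseteq> nbhd V E u" "induced_complete E K n" "4 \<le> n"
    and w: "w1 \<in> V - closed_nbhd V E u" "w2 \<in> V - closed_nbhd V E u"
    and a: "a1 \<in> K" "a2 \<in> K" "E w1 a1" "E w2 a2"
  shows "\<not> E w1 w2"
proof
  assume w12: "E w1 w2"
  have sym: "\<And>x y. E x y \<Longrightarrow> E y x" and irr: "\<And>x. \<not> E x x"
    using G unfolding simple_graph_def by blast+
  have Ku: "\<And>x. x \<in> K \<Longrightarrow> x \<in> V \<and> E u x"
    using K(1) unfolding nbhd_def by auto
  have clique: "\<And>x y. x \<in> K \<Longrightarrow> y \<in> K \<Longrightarrow> x \<noteq> y \<Longrightarrow> E x y"
    using K(2) unfolding induced_complete_def by blast
  have wV: "w1 \<in> V" "w2 \<in> V" "w1 \<noteq> u" "w2 \<noteq> u" "\<not> E u w1" "\<not> E u w2"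
    using w unfolding closed_nbhd_def nbhd_def by auto
  have notK: "x \<noteq> w1" "x \<noteq> w2" "x \<noteq> u" if "x \<in> K" for x
    using Ku[OF that] wV irr by auto
  have "w1 \<noteq> w2"
    using w12 irr by blast
  obtain b c where bc: "b \<in> K" "c \<in> K" "b \<noteq> c" "b \<notin> {a1, a2}" "c \<notin> {a1, a2}"
    using two_elements_avoiding K(2,3) unfolding induced_complete_def by (metis dual_order.trans)
  show False
  proof (cases "a1 = a2")
    case True
    show False
    proof (rule H43_freeD[OF free, of a1 b u c w1 w2])
      show "distinct [a1, b, u, c, w1, w2]"
        using bc a notK[of a1] notK[of b] notK[of c] \<open>w1 \<noteq> w2\<close> wV by auto
    qed (use a bc True Ku clique sym wV u w12 in \<open>auto\<close>)
  next
    case False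
    show False
    proof (rule H43_freeD[OF free, of a1 w1 w2 a2 b c])
      show "distinct [a1, w1, w2, a2, b, c]"
        using bc a notK[of a1] notK[of a2] notK[of b] notK[of c] \<open>w1 \<noteq> w2\<close> False by auto
    qed (use a bc False Ku clique sym wV w12 in \<open>auto\<close>)
  qed
qed

theorem corollary4p3:
  fixes V :: "'a set" and E :: "'a \<Rightarrow> 'a \<Rightarrow> bool" and u :: 'a
  assumes "simple_graph V E"
    and "H43_free V E"
    and "u \<in> V"
    and "Ap = {v \<in> nbhd V E u. \<exists>x \<in> nbhd V E u. E v x}"
    and "W = V - closed_nbhd V E u"
    and "induced_complete E Ap 4"
    and "\<forall>w\<in>W. card {a \<in> Ap. E w a} \<le> 1"
    and "U = {w \<in> W. card {a \<in> Ap. E w a} = 1}"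
  shows "edges_between E Ap W = card U \<and> card U \<le> indep_number E W"
proof
  have sym: "\<And>x y. E x y \<longleftrightarrow> E y x" and "finite V"
    using assms(1) unfolding simple_graph_def by blast+
  then have fin: "finite Ap" "finite W"
    using assms(5,6) unfolding induced_complete_def by auto
  have "edges_between E Ap W = (\<Sum>w\<in>W. card {a \<in> Ap. E w a})"
    using edges_between_eq_sum[OF fin] sym by simp
  also have "\<dots> = card U"
    using sum_le_one_eq_card[OF fin(2) assms(7)] assms(8) by simp
  finally show "edges_between E Ap W = card U" .
  have indep: "independent E U"
    unfolding independent_def
  proof (intro ballI)
    fix w1 w2 assume "w1 \<in> U" "w2 \<in> U"
    moreover have "\<exists>a \<in> Ap. E w a" if "w \<in> U" for w
      using that assms(8) card_gt_0_iff[of "{a \<in> Ap. E w a}"] by auto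
    ultimately obtain a1 a2 where "a1 \<in> Ap" "E w1 a1" "a2 \<in> Ap" "E w2 a2" "w1 \<in> W" "w2 \<in> W"
      using assms(8) by blast
    then show "\<not> E w1 w2"
      using H43_free_clique_neighbours_nonadjacent[OF assms(1-3) _ assms(6)] assms(4,5)
      by auto
  qed
  have "U \<subseteq> W"
    using assms(8) by blast
  then show "card U \<le> indep_number E W"
    using independent_card_le_indep_number[OF fin(2)] indep by blast
qed

end
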